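(* With notation as in the context, let $s\in\{3,4,5,6,7\}$ and $s'=s+1$, and define $\psi_s(J)=\alpha_{s'}+\sum_{\beta\in J}\alpha_{h_s(\beta)}$ for $J\in\mathcal{J}(\Delta_s^+)$. Then $\psi_s$ is an isomorphism of posets from $\mathcal{J}(\Delta_s^+)$ (ordered by inclusion) onto $\Delta_{s'}^+$ when $s\le6$, and onto $\Delta_8^+\setminus\{\theta\}$ when $s=7$, where $\theta$ is the highest root of $E_8$. Moreover it is canonical: if $h:\Delta_s^+\to\{1,\dots,s\}$ is any function for which $J\mapsto\alpha_{s'}+\sum_{\beta\in J}\alpha_{h(\beta)}$ is a poset isomorphism onto the same target, then $h=h_s$.
   Context: Let $\Delta(E_8)$ be the root system of type $E_8$ with simple roots $\alpha_1,\dots,\alpha_8$, where $\langle\alpha_i,\alpha_i\rangle=2$, $\langle\alpha_i,\alpha_j\rangle=-1$ if $\{i,j\}\in\{\{1,3\},\{3,4\},\{4,5\},\{5,6\},\{6,7\},\{7,8\},\{2,4\}\}$, and $0$ otherwise; $\Delta^+$ denotes its positive roots, with $\beta=\sum\beta^i\alpha_i$, partially ordered by $\beta\le\beta'$ iff $\beta'-\beta$ is a nonnegative integer combination of simple roots. For $\beta\in\Delta^+$ let $m(\beta)=\max\{i:\beta^i\ne0\}$, and define the strata $\Delta_1^+=\{\alpha_1\}$, $\Delta_3^+=\{\beta: m(\beta)\in\{2,3\}\}$, $\Delta_s^+=\{\beta: m(\beta)=s\}$ for $4\le s\le 8$, each with the induced order. An order ideal of a poset $Y$ is a subset $J$ such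 that $x\in J$, $y\le x$ imply $y\in J$; $\mathcal{J}(Y)$ is the set of order ideals (including $\emptyset$). For $3\le s\le 8$, $\mathsf{Dyn}(E_s)$ is the graph on $v_1,\dots,v_s$ with $v_i\sim v_j$ iff $\langle\alpha_i,\alpha_j\rangle=-1$; $\mathsf{H}_s$ is the graph on $\Delta_s^+$ with $\beta\sim\beta'$ iff $\pm(\beta-\beta')$ is a simple root. An open map of graphs is a graph homomorphism that maps the neighbours of each vertex onto the neighbours of its image. For $3\le s\le7$ there is a unique function $h_s:\Delta_s^+\to\{1,\dots,s\}$ with $h_s(\alpha_s)=s$ such that $\beta\mapsto v_{h_s(\beta)}$ is an open map $\mathsf{H}_s\to\mathsf{Dyn}(E_s)$; this is the $h_s$ used in the claim. *)

theory Defs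
  imports Main "HOL-Library.FuncSet"
begin

text \<open>Vectors in the root lattice of E8 are coefficient functions nat => int with
  respect to the simple roots alpha_1..alpha_8 (indices outside 1..8 are 0).\<close>

definition E8_edges :: "(nat \<times> nat) set" where
  "E8_edges = {(1,3),(3,4),(4,5),(5,6),(6,7),(7,8),(2,4)}"

definition gram :: "nat \<Rightarrow> nat \<Rightarrow> int" where
  "gram i j = (if i = j then 2
               else if (i,j) \<in> E8_edges \<or> (j,i) \<in> E8_edges then -1 else 0)"

definition form :: "(nat \<Rightarrow> int) \<Rightarrow> (nat \<Rightarrow> int) \<Rightarrow> int" where
  "form b c = (\<Sum>i\<in>{1..8}. \<Sum>j\<in>{1..8}. b i * c j * gram i j)"

definition simple :: "nat \<Rightarrow> nat \<Rightarrow> int" where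
  "simple i = (\<lambda>k. if k = i then 1 else 0)"

definition refl :: "nat \<Rightarrow> (nat \<Rightarrow> int) \<Rightarrow> (nat \<Rightarrow> int)" where
  "refl i b = (\<lambda>k. b k - form (simple i) b * simple i k)"

inductive_set roots :: "(nat \<Rightarrow> int) set" where
  simple_root: "i \<in> {1..8} \<Longrightarrow> simple i \<in> roots"
| refl_root: "b \<in> roots \<Longrightarrow> i \<in> {1..8} \<Longrightarrow> refl i b \<in> roots"

definition pos_roots :: "(nat \<Rightarrow> int) set" where
  "pos_roots = {b \<in> roots. \<forall>k. 0 \<le> b k}"

definition rle :: "(nat \<Rightarrow> int) \<Rightarrow> (nat \<Rightarrow> int) \<Rightarrow> bool" where
  "rle b b' = (\<forall>k. b k \<le> b' k)"

definition mx :: "(nat \<Rightarrow> int) \<Rightarrow> nat" where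
  "mx b = Max {i. b i \<noteq> 0}"

definition stratum :: "nat \<Rightarrow> (nat \<Rightarrow> int) set" where
  "stratum s = (if s = 1 then {simple 1}
                else if s = 3 then {b \<in> pos_roots. mx b \<in> {2,3}}
                else {b \<in> pos_roots. mx b = s})"

definition order_ideal :: "(nat \<Rightarrow> int) set \<Rightarrow> (nat \<Rightarrow> int) set \<Rightarrow> bool" where
  "order_ideal Y J = (J \<subseteq> Y \<and> (\<forall>x\<in>J. \<forall>y\<in>Y. rle y x \<longrightarrow> y \<in> J))"

definition ideals :: "(nat \<Rightarrow> int) set \<Rightarrow> (nat \<Rightarrow> int) set set" where
  "ideals Y = {J. order_ideal Y J}"

definition dyn_adj :: "nat \<Rightarrow> nat \<Rightarrow> bool" where
  "dyn_adj i j = (gram i j = -1)"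

definition H_adj :: "(nat \<Rightarrow> int) \<Rightarrow> (nat \<Rightarrow> int) \<Rightarrow> bool" where
  "H_adj b b' = (\<exists>i\<in>{1..8}. (\<forall>k. b k - b' k = simple i k) \<or> (\<forall>k. b' k - b k = simple i k))"

definition open_map :: "'a set \<Rightarrow> ('a \<Rightarrow> 'a \<Rightarrow> bool) \<Rightarrow> 'b set \<Rightarrow> ('b \<Rightarrow> 'b \<Rightarrow> bool)
    \<Rightarrow> ('a \<Rightarrow> 'b) \<Rightarrow> bool" where
  "open_map V E W F f =
     ((\<forall>x\<in>V. f x \<in> W) \<and>
      (\<forall>x\<in>V. \<forall>y\<in>V. E x y \<longrightarrow> F (f x) (f y)) \<and>
      (\<forall>x\<in>V. f ` {y\<in>V. E x y} = {z\<in>W. F (f x) z}))"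

text \<open>The characterizing property of h_s (vertex v_i identified with i).\<close>
definition is_hs :: "nat \<Rightarrow> ((nat \<Rightarrow> int) \<Rightarrow> nat) \<Rightarrow> bool" where
  "is_hs s h = (h \<in> stratum s \<rightarrow>\<^sub>E {1..s} \<and> h (simple s) = s \<and>
                open_map (stratum s) H_adj {1..s} dyn_adj h)"

definition hS :: "nat \<Rightarrow> (nat \<Rightarrow> int) \<Rightarrow> nat" where
  "hS s = (THE h. is_hs s h)"

definition psi :: "nat \<Rightarrow> ((nat \<Rightarrow> int) \<Rightarrow> nat) \<Rightarrow> (nat \<Rightarrow> int) set \<Rightarrow> (nat \<Rightarrow> int)" where
  "psi s h J = (\<lambda>k. simple (s + 1) k + (\<Sum>b\<in>J. simple (h b) k))"

definition highest_root :: "nat \<Rightarrow> int" where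
  "highest_root = (THE t. t \<in> pos_roots \<and> (\<forall>b\<in>pos_roots. rle b t))"

definition poset_iso_onto :: "nat \<Rightarrow> ((nat \<Rightarrow> int) \<Rightarrow> nat) \<Rightarrow> (nat \<Rightarrow> int) set \<Rightarrow> bool" where
  "poset_iso_onto s h T =
     (bij_betw (psi s h) (ideals (stratum s)) T \<and>
      (\<forall>J\<in>ideals (stratum s). \<forall>J'\<in>ideals (stratum s).
          J \<subseteq> J' \<longleftrightarrow> rle (psi s h J) (psi s h J')))"

definition target :: "nat \<Rightarrow> (nat \<Rightarrow> int) set" where
  "target s = (if s \<le> 6 then stratum (s + 1) else stratum 8 - {highest_root})"

end

theory Submission
  imports Defs
begin

(* Everything is reduced to finite computations with coefficient vectors. The 120 positive roots
   of E8 are listed explicitly; the list contains the simple roots, is closed under the simple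
   reflections up to sign, and every non-simple entry is reflected to a lower entry of the list,
   so it is exactly the set of positive roots. Each stratum is then a concrete list V, and a map
   h on it is a word over {1..s}. Open maps sending alpha_s to s are the words all of whose
   prefixes pass a local test, and a backtracking search finds exactly one such word: this is h_s.
   The order ideals of the stratum are enumerated as bit masks, psi is evaluated on each of them,
   and its values are checked to be exactly the target and to reflect the order. Conversely, if
   psi for some h is a bijection onto the target, every ideal is sent to a root, hence to a
   vector of norm 2, and a second search shows that h_s is the only word with this property. *)

section \<open>Coordinates\<close>

(* Entry k - 1 of the list is the coefficient of alpha_k; all other coordinates are 0. *)
definition coeff_vec :: "int list \<Rightarrow> nat \<Rightarrow> int" where
  "coeff_vec xs k = (if k \<in> {1..8} then xs ! (k - 1) else 0)"

lemma atLeastAtMost_1_8: "{1..8::nat} = {1,2,3,4,5,6,7,8}"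
  by auto

lemma sum_1_8: "(\<Sum>i\<in>{1..8::nat}. f i) = f 1 + f 2 + f 3 + f 4 + f 5 + f 6 + f 7 + f 8"
  by (simp add: numeral_eq_Suc add.assoc)

lemma length_eq_8D: "length xs = 8 \<Longrightarrow> \<exists>x1 x2 x3 x4 x5 x6 x7 x8. xs = [x1,x2,x3,x4,x5,x6,x7,x8]"
  by (simp add: numeral_eq_Suc length_Suc_conv) blast

lemma map_coeff_vec: "length xs = 8 \<Longrightarrow> map (coeff_vec xs) [1..<9] = xs"
  by (rule nth_equalityI) (auto simp: coeff_vec_def)

lemma coeff_vec_inject: "length xs = 8 \<Longrightarrow> length ys = 8 \<Longrightarrow> coeff_vec xs = coeff_vec ys \<longleftrightarrow> xs = ys"
  by (metis map_coeff_vec)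

lemma rle_coeff_vec:
  assumes "length xs = 8" "length ys = 8"
  shows "rle (coeff_vec xs) (coeff_vec ys) \<longleftrightarrow> list_all2 (\<le>) xs ys"
proof
  assume le: "rle (coeff_vec xs) (coeff_vec ys)"
  have "xs ! i \<le> ys ! i" if "i < 8" for i
    using le[unfolded rle_def, rule_format, of "Suc i"] that by (simp add: coeff_vec_def)
  then show "list_all2 (\<le>) xs ys"
    using assms by (simp add: list_all2_conv_all_nth)
next
  assume "list_all2 (\<le>) xs ys"
  then show "rle (coeff_vec xs) (coeff_vec ys)"
    using assms by (auto simp: rle_def coeff_vec_def list_all2_conv_all_nth)
qed

definition unit_coeffs :: "nat \<Rightarrow> int list" where
  "unit_coeffs i = map (\<lambda>k. if k = i then 1 else 0) [1..<9]"

lemma length_unit_coeffs [simp]: "length (unit_coeffs i) = 8"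
  by (simp add: unit_coeffs_def)

lemma simple_coeff_vec: "i \<in> {1..8} \<Longrightarrow> simple i = coeff_vec (unit_coeffs i)"
  by (auto simp: fun_eq_iff simple_def coeff_vec_def unit_coeffs_def nth_map_upt)

definition dynkin_nbrs :: "nat \<Rightarrow> nat list" where
  "dynkin_nbrs i = [[3], [4], [1,4], [2,3,5], [4,6], [5,7], [6,8], [7]] ! (i - 1)"

lemma dyn_adj_iff_dynkin_nbrs:
  assumes "i \<in> {1..8}"
  shows "dyn_adj i j \<longleftrightarrow> j \<in> set (dynkin_nbrs i)"
proof -
  have "i = 1 \<or> i = 2 \<or> i = 3 \<or> i = 4 \<or> i = 5 \<or> i = 6 \<or> i = 7 \<or> i = 8"
    using assms by auto
  then show ?thesis
    by (elim disjE) (auto simp: dyn_adj_def gram_def E8_edges_def dynkin_nbrs_def)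
qed

definition simple_pairing :: "nat \<Rightarrow> int list \<Rightarrow> int" where
  "simple_pairing i xs = 2 * xs ! (i - 1) - sum_list (map (\<lambda>j. xs ! (j - 1)) (dynkin_nbrs i))"

lemma form_simple:
  assumes "i \<in> {1..8}"
  shows "form (simple i) b = (\<Sum>j\<in>{1..8}. b j * gram i j)"
proof -
  have "form (simple i) b = (\<Sum>i'\<in>{1..8}. if i' = i then (\<Sum>j\<in>{1..8}. b j * gram i j) else 0)"
    unfolding form_def by (intro sum.cong refl) (auto simp: simple_def)
  then show ?thesis
    using assms by simp
qed

lemma form_simple_coeff_vec:
  assumes "i \<in> {1..8}" "length xs = 8"
  shows "form (simple i) (coeff_vec xs) = simple_pairing i xs"
proof -
  obtain x1 x2 x3 x4 x5 x6 x7 x8 where "xs = [x1,x2,x3,x4,x5,x6,x7,x8]"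
    using assms(2) length_eq_8D by blast
  moreover have "i = 1 \<or> i = 2 \<or> i = 3 \<or> i = 4 \<or> i = 5 \<or> i = 6 \<or> i = 7 \<or> i = 8"
    using assms(1) by auto
  ultimately show ?thesis
    unfolding form_simple[OF assms(1)] sum_1_8
    by (elim disjE) (simp_all add: coeff_vec_def gram_def E8_edges_def simple_pairing_def dynkin_nbrs_def)
qed

lemma form_expand: "form b c = (\<Sum>i\<in>{1..8}. b i * form (simple i) c)"
proof -
  have "form b c = (\<Sum>i\<in>{1..8}. b i * (\<Sum>j\<in>{1..8}. c j * gram i j))"
    by (simp add: form_def sum_distrib_left mult.assoc)
  then show ?thesis
    by (simp add: form_simple)
qed

definition reflect_coeffs :: "nat \<Rightarrow> int list \<Rightarrow> int list" where
  "reflect_coeffs i xs = xs[i - 1 := xs ! (i - 1) - simple_pairing i xs]"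

lemma length_reflect_coeffs [simp]: "length (reflect_coeffs i xs) = length xs"
  by (simp add: reflect_coeffs_def)

lemma refl_coeff_vec:
  assumes "i \<in> {1..8}" "length xs = 8"
  shows "refl i (coeff_vec xs) = coeff_vec (reflect_coeffs i xs)"
  using assms unfolding refl_def form_simple_coeff_vec[OF assms]
  by (auto simp: fun_eq_iff coeff_vec_def reflect_coeffs_def simple_def nth_list_update)

lemma reflect_coeffs_uminus:
  assumes "length xs = 8" "i \<in> {1..8}"
  shows "reflect_coeffs i (map uminus xs) = map uminus (reflect_coeffs i xs)"
proof -
  obtain x1 x2 x3 x4 x5 x6 x7 x8 where "xs = [x1,x2,x3,x4,x5,x6,x7,x8]"
    using assms(1) length_eq_8D by blast
  moreover have "i = 1 \<or> i = 2 \<or> i = 3 \<or> i = 4 \<or> i = 5 \<or> i = 6 \<or> i = 7 \<or> i = 8"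
    using assms(2) by auto
  ultimately show ?thesis
    by (elim disjE) (simp_all add: reflect_coeffs_def simple_pairing_def dynkin_nbrs_def)
qed

lemma reflect_coeffs_involutive:
  assumes "length xs = 8" "i \<in> {1..8}"
  shows "reflect_coeffs i (reflect_coeffs i xs) = xs"
proof -
  obtain x1 x2 x3 x4 x5 x6 x7 x8 where "xs = [x1,x2,x3,x4,x5,x6,x7,x8]"
    using assms(1) length_eq_8D by blast
  moreover have "i = 1 \<or> i = 2 \<or> i = 3 \<or> i = 4 \<or> i = 5 \<or> i = 6 \<or> i = 7 \<or> i = 8"
    using assms(2) by auto
  ultimately show ?thesis
    by (elim disjE) (simp_all add: reflect_coeffs_def simple_pairing_def dynkin_nbrs_def)
qed

definition norm_coeffs :: "int list \<Rightarrow> int" where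
  "norm_coeffs xs = (\<Sum>i\<leftarrow>[1..<9]. xs ! (i - 1) * simple_pairing i xs)"

lemma form_coeff_vec:
  assumes "length xs = 8"
  shows "form (coeff_vec xs) (coeff_vec xs) = norm_coeffs xs"
proof -
  have "form (coeff_vec xs) (coeff_vec xs) = (\<Sum>i\<in>{1..8}. coeff_vec xs i * form (simple i) (coeff_vec xs))"
    by (rule form_expand)
  also have "\<dots> = (\<Sum>i\<in>set [1..<9]. xs ! (i - 1) * simple_pairing i xs)"
    by (intro sum.cong) (auto simp: form_simple_coeff_vec assms coeff_vec_def)
  also have "\<dots> = norm_coeffs xs"
    by (simp only: norm_coeffs_def sum_set_upt_conv_sum_list_nat)
  finally show ?thesis .
qed

section \<open>The positive roots of E8\<close>

definition pos_root_coeffs :: "int list list" where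
  "pos_root_coeffs =
   [[0,0,0,0,0,0,0,1],
    [0,0,0,0,0,0,1,0],
    [0,0,0,0,0,1,0,0],
    [0,0,0,0,1,0,0,0],
    [0,0,0,1,0,0,0,0],
    [0,0,1,0,0,0,0,0],
    [0,1,0,0,0,0,0,0],
    [1,0,0,0,0,0,0,0],
    [0,0,0,0,0,0,1,1],
    [0,0,0,0,0,1,1,0],
    [0,0,0,0,1,1,0,0],
    [0,0,0,1,1,0,0,0],
    [0,0,1,1,0,0,0,0],
    [0,1,0,1,0,0,0,0],
    [1,0,1,0,0,0,0,0],
    [0,0,0,0,0,1,1,1],
    [0,0,0,0,1,1,1,0],
    [0,0,0,1,1,1,0,0],
    [0,0,1,1,1,0,0,0],
    [0,1,0,1,1,0,0,0],
    [0,1,1,1,0,0,0,0],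
    [1,0,1,1,0,0,0,0],
    [0,0,0,0,1,1,1,1],
    [0,0,0,1,1,1,1,0],
    [0,0,1,1,1,1,0,0],
    [0,1,0,1,1,1,0,0],
    [0,1,1,1,1,0,0,0],
    [1,0,1,1,1,0,0,0],
    [1,1,1,1,0,0,0,0],
    [0,0,0,1,1,1,1,1],
    [0,0,1,1,1,1,1,0],
    [0,1,0,1,1,1,1,0],
    [0,1,1,1,1,1,0,0],
    [0,1,1,2,1,0,0,0],
    [1,0,1,1,1,1,0,0],
    [1,1,1,1,1,0,0,0],
    [0,0,1,1,1,1,1,1],
    [0,1,0,1,1,1,1,1],
    [0,1,1,1,1,1,1,0],
    [0,1,1,2,1,1,0,0],
    [1,0,1,1,1,1,1,0],
    [1,1,1,1,1,1,0,0],
    [1,1,1,2,1,0,0,0],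
    [0,1,1,1,1,1,1,1],
    [0,1,1,2,1,1,1,0],
    [0,1,1,2,2,1,0,0],
    [1,0,1,1,1,1,1,1],
    [1,1,1,1,1,1,1,0],
    [1,1,1,2,1,1,0,0],
    [1,1,2,2,1,0,0,0],
    [0,1,1,2,1,1,1,1],
    [0,1,1,2,2,1,1,0],
    [1,1,1,1,1,1,1,1],
    [1,1,1,2,1,1,1,0],
    [1,1,1,2,2,1,0,0],
    [1,1,2,2,1,1,0,0],
    [0,1,1,2,2,1,1,1],
    [0,1,1,2,2,2,1,0],
    [1,1,1,2,1,1,1,1],
    [1,1,1,2,2,1,1,0],
    [1,1,2,2,1,1,1,0],
    [1,1,2,2,2,1,0,0],
    [0,1,1,2,2,2,1,1],
    [1,1,1,2,2,1,1,1],
    [1,1,1,2,2,2,1,0],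
    [1,1,2,2,1,1,1,1],
    [1,1,2,2,2,1,1,0],
    [1,1,2,3,2,1,0,0],
    [0,1,1,2,2,2,2,1],
    [1,1,1,2,2,2,1,1],
    [1,1,2,2,2,1,1,1],
    [1,1,2,2,2,2,1,0],
    [1,1,2,3,2,1,1,0],
    [1,2,2,3,2,1,0,0],
    [1,1,1,2,2,2,2,1],
    [1,1,2,2,2,2,1,1],
    [1,1,2,3,2,1,1,1],
    [1,1,2,3,2,2,1,0],
    [1,2,2,3,2,1,1,0],
    [1,1,2,2,2,2,2,1],
    [1,1,2,3,2,2,1,1],
    [1,1,2,3,3,2,1,0],
    [1,2,2,3,2,1,1,1],
    [1,2,2,3,2,2,1,0],
    [1,1,2,3,2,2,2,1],
    [1,1,2,3,3,2,1,1],
    [1,2,2,3,2,2,1,1],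
    [1,2,2,3,3,2,1,0],
    [1,1,2,3,3,2,2,1],
    [1,2,2,3,2,2,2,1],
    [1,2,2,3,3,2,1,1],
    [1,2,2,4,3,2,1,0],
    [1,1,2,3,3,3,2,1],
    [1,2,2,3,3,2,2,1],
    [1,2,2,4,3,2,1,1],
    [1,2,3,4,3,2,1,0],
    [1,2,2,3,3,3,2,1],
    [1,2,2,4,3,2,2,1],
    [1,2,3,4,3,2,1,1],
    [2,2,3,4,3,2,1,0],
    [1,2,2,4,3,3,2,1],
    [1,2,3,4,3,2,2,1],
    [2,2,3,4,3,2,1,1],
    [1,2,2,4,4,3,2,1],
    [1,2,3,4,3,3,2,1],
    [2,2,3,4,3,2,2,1],
    [1,2,3,4,4,3,2,1],
    [2,2,3,4,3,3,2,1],
    [1,2,3,5,4,3,2,1],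
    [2,2,3,4,4,3,2,1],
    [1,3,3,5,4,3,2,1],
    [2,2,3,5,4,3,2,1],
    [2,2,4,5,4,3,2,1],
    [2,3,3,5,4,3,2,1],
    [2,3,4,5,4,3,2,1],
    [2,3,4,6,4,3,2,1],
    [2,3,4,6,5,3,2,1],
    [2,3,4,6,5,4,2,1],
    [2,3,4,6,5,4,3,1],
    [2,3,4,6,5,4,3,2]]"

(* Wrapping membership in a constant turns every table entry into a simp rule of its own, so the
   membership tests in the checks below are rule lookups instead of list comparisons. *)
definition is_pos_root_coeffs :: "int list \<Rightarrow> bool" where
  "is_pos_root_coeffs xs \<longleftrightarrow> xs \<in> set pos_root_coeffs"

lemma list_all_is_pos_root_coeffs: "list_all is_pos_root_coeffs pos_root_coeffs"
  by (simp add: is_pos_root_coeffs_def list_all_iff)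

lemmas is_pos_root_coeffs_table = list_all_is_pos_root_coeffs[unfolded pos_root_coeffs_def, simplified]

lemma pos_root_coeffs_check:
  "list_all (\<lambda>xs. length xs = 8 \<and> list_all (\<lambda>x. 0 \<le> x) xs \<and> list_ex (\<lambda>x. 0 < x) xs \<and> norm_coeffs xs = 2)
     pos_root_coeffs"
  unfolding pos_root_coeffs_def by (simp add: norm_coeffs_def upt_rec simple_pairing_def dynkin_nbrs_def)

lemma pos_root_coeffsD:
  assumes "xs \<in> set pos_root_coeffs"
  shows "length xs = 8" "\<forall>x\<in>set xs. 0 \<le> x" "\<exists>x\<in>set xs. 0 < x" "norm_coeffs xs = 2"
  using pos_root_coeffs_check assms by (auto simp: list_all_iff list_ex_iff)

lemma unit_coeffs_pos_root_coeffs: "i \<in> {1..8} \<Longrightarrow> unit_coeffs i \<in> set pos_root_coeffs"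
  unfolding atLeastAtMost_1_8
  by (auto simp: unit_coeffs_def upt_rec is_pos_root_coeffs_table simp flip: is_pos_root_coeffs_def)

lemma reflect_pos_root_coeffs_check:
  "list_all (\<lambda>xs. \<forall>i\<in>{1,2,3,4,5,6,7,8}. is_pos_root_coeffs (reflect_coeffs i xs)
                      \<or> is_pos_root_coeffs (map uminus (reflect_coeffs i xs))) pos_root_coeffs"
  unfolding pos_root_coeffs_def
  by (simp add: reflect_coeffs_def simple_pairing_def dynkin_nbrs_def is_pos_root_coeffs_table)

lemma reflect_pos_root_coeffs:
  "xs \<in> set pos_root_coeffs \<Longrightarrow> i \<in> {1..8} \<Longrightarrow>
    reflect_coeffs i xs \<in> set pos_root_coeffs \<or> map uminus (reflect_coeffs i xs) \<in> set pos_root_coeffs"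
  using reflect_pos_root_coeffs_check
  unfolding atLeastAtMost_1_8 list_all_iff is_pos_root_coeffs_def by blast

lemma pos_root_coeffs_descent_check:
  "list_all (\<lambda>xs. (\<exists>i\<in>{1,2,3,4,5,6,7,8}. xs = unit_coeffs i)
                  \<or> (\<exists>i\<in>{1,2,3,4,5,6,7,8}. is_pos_root_coeffs (reflect_coeffs i xs)
                        \<and> sum_list (reflect_coeffs i xs) < sum_list xs)) pos_root_coeffs"
  unfolding pos_root_coeffs_def
  by (simp add: reflect_coeffs_def simple_pairing_def dynkin_nbrs_def unit_coeffs_def upt_rec
      is_pos_root_coeffs_table)

lemma pos_root_coeffs_descent:
  "xs \<in> set pos_root_coeffs \<Longrightarrow> (\<exists>i\<in>{1..8}. xs = unit_coeffs i) \<or>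
    (\<exists>i\<in>{1..8}. reflect_coeffs i xs \<in> set pos_root_coeffs \<and> sum_list (reflect_coeffs i xs) < sum_list xs)"
  using pos_root_coeffs_descent_check
  unfolding atLeastAtMost_1_8 list_all_iff is_pos_root_coeffs_def by blast

lemma roots_subset_pos_root_coeffs:
  "b \<in> roots \<Longrightarrow> \<exists>xs\<in>set pos_root_coeffs. b = coeff_vec xs \<or> b = coeff_vec (map uminus xs)"
proof (induction rule: roots.induct)
  case (simple_root i)
  then show ?case
    using unit_coeffs_pos_root_coeffs simple_coeff_vec by blast
next
  case (refl_root b i)
  then obtain xs where xs: "xs \<in> set pos_root_coeffs" and b: "b = coeff_vec xs \<or> b = coeff_vec (map uminus xs)"
    by blast
  have len: "length xs = 8"
    using pos_root_coeffsD(1)[OF xs] .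
  have "refl i b = coeff_vec (reflect_coeffs i xs) \<or> refl i b = coeff_vec (map uminus (reflect_coeffs i xs))"
    using b refl_coeff_vec[OF refl_root.hyps(2)] reflect_coeffs_uminus[OF len refl_root.hyps(2)] len by auto
  then show ?case
    using reflect_pos_root_coeffs[OF xs refl_root.hyps(2)] by (metis (no_types) minus_minus map_idI
        map_map o_def)
qed

lemma coeff_vec_in_roots: "xs \<in> set pos_root_coeffs \<Longrightarrow> coeff_vec xs \<in> roots"
proof (induction "nat (sum_list xs)" arbitrary: xs rule: less_induct)
  case less
  have len: "length xs = 8"
    using pos_root_coeffsD(1)[OF less.prems] .
  from pos_root_coeffs_descent[OF less.prems] show ?case
  proof (elim disjE bexE conjE)
    fix i assume "i \<in> {1..8}" "xs = unit_coeffs i"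
    then show ?thesis
      using simple_coeff_vec roots.simple_root by metis
  next
    fix i assume i: "i \<in> {1..8}" and ys: "reflect_coeffs i xs \<in> set pos_root_coeffs"
      and lt: "sum_list (reflect_coeffs i xs) < sum_list xs"
    have "0 \<le> sum_list (reflect_coeffs i xs)"
      using pos_root_coeffsD(2)[OF ys] by (simp add: sum_list_nonneg)
    then have "coeff_vec (reflect_coeffs i xs) \<in> roots"
      using less.hyps[OF _ ys] lt by simp
    then have "refl i (coeff_vec (reflect_coeffs i xs)) \<in> roots"
      using i by (rule roots.refl_root)
    then show ?thesis
      using refl_coeff_vec[OF i] len reflect_coeffs_involutive[OF len i] by simp
  qed
qed

lemma pos_roots_eq: "pos_roots = coeff_vec ` set pos_root_coeffs"
proof
  show "pos_roots \<subseteq> coeff_vec ` set pos_root_coeffs"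
  proof
    fix b assume "b \<in> pos_roots"
    then have b: "b \<in> roots" "\<forall>k. 0 \<le> b k"
      by (auto simp: pos_roots_def)
    obtain xs where xs: "xs \<in> set pos_root_coeffs" and "b = coeff_vec xs \<or> b = coeff_vec (map uminus xs)"
      using roots_subset_pos_root_coeffs[OF b(1)] by blast
    moreover have "b \<noteq> coeff_vec (map uminus xs)"
    proof
      assume neg: "b = coeff_vec (map uminus xs)"
      obtain j where j: "j < length xs" "0 < xs ! j"
        using pos_root_coeffsD(3)[OF xs] by (auto simp: in_set_conv_nth)
      then have "b (Suc j) < 0"
        using neg pos_root_coeffsD(1)[OF xs] by (simp add: coeff_vec_def)
      then show False
        using b(2) by (metis not_le)
    qed
    ultimately show "b \<in> coeff_vec ` set pos_root_coeffs"
      by blast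
  qed
  show "coeff_vec ` set pos_root_coeffs \<subseteq> pos_roots"
  proof
    fix b assume "b \<in> coeff_vec ` set pos_root_coeffs"
    then obtain xs where xs: "xs \<in> set pos_root_coeffs" "b = coeff_vec xs"
      by blast
    have "0 \<le> xs ! i" if "i < 8" for i
      using pos_root_coeffsD(1,2)[OF xs(1)] that by (metis nth_mem)
    then have "\<forall>k. 0 \<le> b k"
      using xs(2) by (auto simp: coeff_vec_def)
    then show "b \<in> pos_roots"
      using coeff_vec_in_roots xs by (simp add: pos_roots_def)
  qed
qed

lemma form_pos_root: "b \<in> pos_roots \<Longrightarrow> form b b = 2"
  using pos_root_coeffsD(1,4) by (auto simp: pos_roots_eq form_coeff_vec)

definition highest_root_coeffs :: "int list" where
  "highest_root_coeffs = [2,3,4,6,5,4,3,2]"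

lemma highest_root_coeffs_check:
  "is_pos_root_coeffs highest_root_coeffs \<and> list_all (\<lambda>xs. list_all2 (\<le>) xs highest_root_coeffs) pos_root_coeffs"
  unfolding pos_root_coeffs_def highest_root_coeffs_def by (simp add: is_pos_root_coeffs_table)

lemma highest_root_eq: "highest_root = coeff_vec highest_root_coeffs"
  unfolding highest_root_def
proof (rule the_equality)
  have mem: "highest_root_coeffs \<in> set pos_root_coeffs"
    using highest_root_coeffs_check by (simp add: is_pos_root_coeffs_def)
  have le: "rle b (coeff_vec highest_root_coeffs)" if "b \<in> pos_roots" for b
    using that highest_root_coeffs_check pos_root_coeffsD(1) mem
    by (auto simp: pos_roots_eq rle_coeff_vec list_all_iff)
  show "coeff_vec highest_root_coeffs \<in> pos_roots \<and> (\<forall>b\<in>pos_roots. rle b (coeff_vec highest_root_coeffs))"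
    using mem le by (simp add: pos_roots_eq)
  fix t assume "t \<in> pos_roots \<and> (\<forall>b\<in>pos_roots. rle b t)"
  then have "rle t (coeff_vec highest_root_coeffs)" "rle (coeff_vec highest_root_coeffs) t"
    using le mem by (auto simp: pos_roots_eq)
  then show "t = coeff_vec highest_root_coeffs"
    by (auto simp: rle_def fun_eq_iff intro: antisym)
qed

fun last_nonzero :: "int list \<Rightarrow> nat" where
  "last_nonzero [] = 0"
| "last_nonzero (x # xs) = (if last_nonzero xs \<noteq> 0 then Suc (last_nonzero xs) else if x \<noteq> 0 then 1 else 0)"

lemma last_nonzero_nth: "last_nonzero xs \<noteq> 0 \<Longrightarrow> last_nonzero xs \<le> length xs \<and> xs ! (last_nonzero xs - 1) \<noteq> 0"
  by (induction xs) (auto split: if_splits)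

lemma last_nonzero_neq_0: "\<exists>x\<in>set xs. x \<noteq> 0 \<Longrightarrow> last_nonzero xs \<noteq> 0"
  by (induction xs) (auto split: if_splits)

lemma nth_beyond_last_nonzero: "last_nonzero xs \<le> j \<Longrightarrow> j < length xs \<Longrightarrow> xs ! j = 0"
proof (induction xs arbitrary: j)
  case (Cons x xs)
  then show ?case
    by (cases j) (auto split: if_splits)
qed simp

lemma mx_coeff_vec:
  assumes "length xs = 8" "\<exists>x\<in>set xs. x \<noteq> 0"
  shows "mx (coeff_vec xs) = last_nonzero xs"
proof -
  have nz: "last_nonzero xs \<noteq> 0"
    using last_nonzero_neq_0[OF assms(2)] .
  have "coeff_vec xs (last_nonzero xs) \<noteq> 0"
    using last_nonzero_nth[OF nz] nz assms(1) by (simp add: coeff_vec_def)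
  moreover have "j \<le> last_nonzero xs" if "coeff_vec xs j \<noteq> 0" for j
  proof (rule ccontr)
    assume "\<not> j \<le> last_nonzero xs"
    then have "xs ! (j - 1) = 0"
      using that assms(1) by (intro nth_beyond_last_nonzero) (auto simp: coeff_vec_def split: if_splits)
    then show False
      using that by (simp add: coeff_vec_def split: if_splits)
  qed
  moreover have "finite {i. coeff_vec xs i \<noteq> 0}"
    by (rule finite_subset[of _ "{1..8}"]) (auto simp: coeff_vec_def split: if_splits)
  ultimately show ?thesis
    unfolding mx_def by (intro Max_eqI) auto
qed

definition stratum_coeffs :: "nat \<Rightarrow> int list list" where
  "stratum_coeffs s =
     filter (\<lambda>xs. if s = 3 then last_nonzero xs \<in> {2,3} else last_nonzero xs = s) pos_root_coeffs"

lemma stratum_eq: "s \<noteq> 1 \<Longrightarrow> stratum s = coeff_vec ` set (stratum_coeffs s)"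
proof -
  assume "s \<noteq> 1"
  have "mx (coeff_vec xs) = last_nonzero xs" if "xs \<in> set pos_root_coeffs" for xs
    using pos_root_coeffsD(1,3)[OF that] by (intro mx_coeff_vec) (auto, metis less_irrefl)
  then show ?thesis
    using \<open>s \<noteq> 1\<close> by (auto simp: stratum_def stratum_coeffs_def pos_roots_eq)
qed

definition target_coeffs :: "nat \<Rightarrow> int list list" where
  "target_coeffs s =
     (if s \<le> 6 then stratum_coeffs (s + 1) else removeAll highest_root_coeffs (stratum_coeffs 8))"

lemma target_eq:
  assumes "s \<noteq> 0"
  shows "target s = coeff_vec ` set (target_coeffs s)"
proof -
  have "coeff_vec ` set (stratum_coeffs 8) - {coeff_vec highest_root_coeffs}
          = coeff_vec ` (set (stratum_coeffs 8) - {highest_root_coeffs})"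
    using pos_root_coeffsD(1) by (auto simp: stratum_coeffs_def highest_root_coeffs_def coeff_vec_inject)
  then show ?thesis
    using assms by (simp add: target_def target_coeffs_def stratum_eq highest_root_eq)
qed

lemma simple_in_pos_roots: "i \<in> {1..8} \<Longrightarrow> simple i \<in> pos_roots"
  using roots.simple_root by (simp add: pos_roots_def simple_def)

lemma stratum_subset_pos_roots: "stratum s \<subseteq> pos_roots"
  using simple_in_pos_roots[of 1] by (auto simp: stratum_def)

lemma target_subset_pos_roots: "target s \<subseteq> pos_roots"
  using stratum_subset_pos_roots by (auto simp: target_def)

section \<open>Backtracking search\<close>

fun search_words :: "('b \<Rightarrow> 'a list \<Rightarrow> bool) \<Rightarrow> 'a list \<Rightarrow> 'b list \<Rightarrow> 'a list \<Rightarrow> 'a list list" where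
  "search_words ok cs [] w = [w]"
| "search_words ok cs (y # ys) w =
     concat (map (\<lambda>c. if ok y (w @ [c]) then search_words ok cs ys (w @ [c]) else []) cs)"

lemma search_words_complete:
  assumes "length u = length w + length ys" "take (length w) u = w" "set (drop (length w) u) \<subseteq> set cs"
    and "\<forall>l. length w < l \<and> l \<le> length u \<longrightarrow> ok (ys ! (l - length w - 1)) (take l u)"
  shows "u \<in> set (search_words ok cs ys w)"
  using assms
proof (induction ys arbitrary: w)
  case Nil
  then show ?case by simp
next
  case (Cons y ys)
  let ?c = "u ! length w"
  have lt: "length w < length u"
    using Cons.prems(1) by simp
  have take_Suc: "take (Suc (length w)) u = w @ [?c]"
    using Cons.prems(2) lt by (simp add: take_Suc_conv_app_nth)
  have "?c \<in> set cs"
    using Cons.prems(3) lt by (metis drop_eq_Nil2 hd_drop_conv_nth hd_in_set not_le subsetD)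
  moreover have "ok ((y # ys) ! (Suc (length w) - length w - 1)) (take (Suc (length w)) u)"
    using Cons.prems(4)[rule_format, of "Suc (length w)"] lt by simp
  then have "ok y (w @ [?c])"
    using take_Suc by simp
  moreover have "set (drop (Suc (length w)) u) \<subseteq> set cs"
    using Cons.prems(3) set_drop_subset_set_drop[of "length w" "Suc (length w)" u] by auto
  moreover have "ok (ys ! (l - length (w @ [?c]) - 1)) (take l u)"
    if "length (w @ [?c]) < l" "l \<le> length u" for l
  proof -
    have "l - length w - 1 = Suc (l - length (w @ [?c]) - 1)"
      using that by simp
    then show ?thesis
      using Cons.prems(4) that by (metis Suc_lessD length_append_singleton nth_Cons_Suc)
  qed
  then have "u \<in> set (search_words ok cs ys (w @ [?c]))"
    using Cons.prems take_Suc \<open>set (drop (Suc (length w)) u) \<subseteq> set cs\<close> by (intro Cons.IH) auto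
  ultimately show ?case
    by auto
qed

lemma search_words_sound:
  assumes "u \<in> set (search_words ok cs ys w)"
  shows "length u = length w + length ys \<and> take (length w) u = w \<and> set (drop (length w) u) \<subseteq> set cs
    \<and> (\<forall>l. length w < l \<and> l \<le> length u \<longrightarrow> ok (ys ! (l - length w - 1)) (take l u))"
  using assms
proof (induction ys arbitrary: w)
  case Nil
  then show ?case by auto
next
  case (Cons y ys)
  then obtain c where c: "c \<in> set cs" "ok y (w @ [c])" "u \<in> set (search_words ok cs ys (w @ [c]))"
    by (auto split: if_splits)
  note IH = Cons.IH[OF c(3)]
  have len: "length u = length w + length (y # ys)"
    using IH by simp
  have take_Suc: "take (Suc (length w)) u = w @ [c]"
    using IH by simp
  have "take (length w) u = take (length w) (take (Suc (length w)) u)"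
    by simp
  then have take_w: "take (length w) u = w"
    using take_Suc by simp
  have "u ! length w = c"
    using take_Suc len by (metis lessI nth_append_length nth_take)
  then have "drop (length w) u = c # drop (Suc (length w)) u"
    using Cons_nth_drop_Suc[of "length w" u] len by simp
  then have drop_w: "set (drop (length w) u) \<subseteq> set cs"
    using IH c(1) by simp
  have "ok ((y # ys) ! (l - length w - 1)) (take l u)" if "length w < l" "l \<le> length u" for l
  proof (cases "l = Suc (length w)")
    case True
    then show ?thesis
      using take_Suc c(2) by simp
  next
    case False
    then show ?thesis
      using IH that by (auto simp: nth_Cons')
  qed
  then show ?case
    using len take_w drop_w by blast
qed

lemma set_search_words:
  "set (search_words ok cs ys []) =
     {u. length u = length ys \<and> set u \<subseteq> set cs \<and> (\<forall>l\<in>{1..length u}. ok (ys ! (l - 1)) (take l u))}"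
  using search_words_sound[of _ ok cs ys "[]"] search_words_complete[of _ "[]" ys cs ok]
  by (auto simp: Suc_le_eq)

section \<open>Open maps as labellings\<close>

lemma open_map_iff:
  "open_map V E W F f \<longleftrightarrow> (\<forall>x\<in>V. f x \<in> W \<and> f ` {y\<in>V. E x y} = {z\<in>W. F (f x) z})"
  unfolding open_map_def by blast

lemma image_coeff_vec_conv: "b \<in> coeff_vec ` set V \<longleftrightarrow> (\<exists>i<length V. b = coeff_vec (V ! i))"
  by (metis imageE imageI in_set_conv_nth)

locale coeff_table =
  fixes V :: "int list list"
  assumes distinct: "distinct V"
    and length_8: "x \<in> set V \<Longrightarrow> length x = 8"
begin

lemma length_nth: "i < length V \<Longrightarrow> length (V ! i) = 8"
  using length_8 by simp

lemma coeff_vec_nth_inject: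
  "i < length V \<Longrightarrow> j < length V \<Longrightarrow> coeff_vec (V ! i) = coeff_vec (V ! j) \<longleftrightarrow> i = j"
  using distinct by (simp add: coeff_vec_inject length_nth nth_eq_iff_index_eq)

lemma distinct_map_coeff_vec: "distinct (map coeff_vec V)"
  using coeff_vec_nth_inject by (auto simp: distinct_conv_nth)

end

definition label_fun :: "int list list \<Rightarrow> 'a list \<Rightarrow> (nat \<Rightarrow> int) \<Rightarrow> 'a" where
  "label_fun V a = restrict (\<lambda>b. the (map_of (zip (map coeff_vec V) a) b)) (coeff_vec ` set V)"

lemma (in coeff_table) label_fun_nth:
  "length a = length V \<Longrightarrow> i < length V \<Longrightarrow> label_fun V a (coeff_vec (V ! i)) = a ! i"
  using map_of_zip_nth[OF _ distinct_map_coeff_vec, of a i] by (simp add: label_fun_def)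

lemma (in coeff_table) map_label_fun: "length a = length V \<Longrightarrow> map (label_fun V a \<circ> coeff_vec) V = a"
  by (rule nth_equalityI) (simp_all add: label_fun_nth)

lemma (in coeff_table) eq_label_fun_iff:
  assumes len: "length a = length V"
  shows "h = label_fun V a \<longleftrightarrow> h \<in> extensional (coeff_vec ` set V) \<and> map (h \<circ> coeff_vec) V = a"
proof
  assume "h \<in> extensional (coeff_vec ` set V) \<and> map (h \<circ> coeff_vec) V = a"
  then have ext: "h \<in> extensional (coeff_vec ` set V)" and labels: "map (h \<circ> coeff_vec) V = a"
    by blast+
  show "h = label_fun V a"
  proof (rule extensionalityI[OF ext])
    show "label_fun V a \<in> extensional (coeff_vec ` set V)"
      by (simp add: label_fun_def)
    fix x assume "x \<in> coeff_vec ` set V"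
    then obtain i where i: "i < length V" "x = coeff_vec (V ! i)"
      by (auto simp: image_coeff_vec_conv)
    have "h (coeff_vec (V ! i)) = a ! i"
      using labels i(1) by auto
    then show "h x = label_fun V a x"
      using i len by (simp add: label_fun_nth)
  qed
next
  assume "h = label_fun V a"
  moreover have "label_fun V a \<in> extensional (coeff_vec ` set V)"
    by (simp add: label_fun_def)
  ultimately show "h \<in> extensional (coeff_vec ` set V) \<and> map (h \<circ> coeff_vec) V = a"
    using map_label_fun[OF len] by simp
qed

definition unit_vectors :: "int list list" where
  "unit_vectors = map unit_coeffs [1..<9]"

definition adjacent_coeffs :: "int list \<Rightarrow> int list \<Rightarrow> bool" where
  "adjacent_coeffs x y \<longleftrightarrow> map2 (-) x y \<in> set unit_vectors \<or> map2 (-) y x \<in> set unit_vectors"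

definition true_indices :: "bool list \<Rightarrow> nat list" where
  "true_indices bs = map fst (filter snd (zip [0..<length bs] bs))"

lemma set_true_indices: "set (true_indices bs) = {i. i < length bs \<and> bs ! i}"
  by (force simp: true_indices_def in_set_zip image_iff)

definition nbr_indices :: "int list list \<Rightarrow> nat list list" where
  "nbr_indices V = map (\<lambda>x. true_indices (map (adjacent_coeffs x) V)) V"

lemma length_nbr_indices [simp]: "length (nbr_indices V) = length V"
  by (simp add: nbr_indices_def)

lemma coeff_vec_map2_minus:
  "length x = 8 \<Longrightarrow> length y = 8 \<Longrightarrow> coeff_vec (map2 (-) x y) = (\<lambda>k. coeff_vec x k - coeff_vec y k)"
  by (auto simp: fun_eq_iff coeff_vec_def)

lemma H_adj_coeff_vec:
  assumes "length x = 8" "length y = 8"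
  shows "H_adj (coeff_vec x) (coeff_vec y) \<longleftrightarrow> adjacent_coeffs x y"
proof -
  have "(\<forall>k. coeff_vec x k - coeff_vec y k = simple i k) \<longleftrightarrow> map2 (-) x y = unit_coeffs i"
    if "i \<in> {1..8}" "length x = 8" "length y = 8" for i x y
  proof -
    have "(\<forall>k. coeff_vec x k - coeff_vec y k = simple i k) \<longleftrightarrow>
        coeff_vec (map2 (-) x y) = coeff_vec (unit_coeffs i)"
      using that by (simp add: coeff_vec_map2_minus simple_coeff_vec fun_eq_iff)
    then show ?thesis
      using that by (simp add: coeff_vec_inject)
  qed
  then show ?thesis
    using assms by (auto simp: H_adj_def adjacent_coeffs_def unit_vectors_def atLeastLessThanSuc_atLeastAtMost)
qed

lemma (in coeff_table) set_nbr_indices: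
  "i < length V \<Longrightarrow> set (nbr_indices V ! i) = {j. j < length V \<and> H_adj (coeff_vec (V ! i)) (coeff_vec (V ! j))}"
  by (auto simp: nbr_indices_def set_true_indices H_adj_coeff_vec length_nth)

lemma (in coeff_table) image_H_adj_nbrs:
  assumes "i < length V"
  shows "h ` {y \<in> coeff_vec ` set V. H_adj (coeff_vec (V ! i)) y} = set (map ((!) (map (h \<circ> coeff_vec) V)) (nbr_indices V ! i))"
proof -
  have "{y \<in> coeff_vec ` set V. H_adj (coeff_vec (V ! i)) y} = (\<lambda>j. coeff_vec (V ! j)) ` set (nbr_indices V ! i)"
    using assms by (auto simp: set_nbr_indices image_coeff_vec_conv)
  then show ?thesis
    using assms by (auto simp: set_nbr_indices image_image)
qed

definition dynkin_nbrs_upto :: "nat \<Rightarrow> nat \<Rightarrow> nat list" where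
  "dynkin_nbrs_upto s c = filter (\<lambda>z. z \<le> s) (dynkin_nbrs c)"

lemma set_dynkin_nbrs_upto: "c \<in> {1..8} \<Longrightarrow> set (dynkin_nbrs_upto s c) = {z \<in> {1..s}. dyn_adj c z}"
  unfolding atLeastAtMost_1_8 
  by (auto simp: dynkin_nbrs_upto_def dyn_adj_iff_dynkin_nbrs dynkin_nbrs_def)

definition open_labelling :: "nat \<Rightarrow> nat list list \<Rightarrow> nat list \<Rightarrow> bool" where
  "open_labelling s NB a \<longleftrightarrow>
     (\<forall>i<length a. a ! i \<in> {1..s} \<and> set (map ((!) a) (NB ! i)) = set (dynkin_nbrs_upto s (a ! i)))"

lemma (in coeff_table) open_map_iff_open_labelling:
  assumes "s \<le> 8"
  shows "open_map (coeff_vec ` set V) H_adj {1..s} dyn_adj h \<longleftrightarrow>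
    open_labelling s (nbr_indices V) (map (h \<circ> coeff_vec) V)"
proof -
  let ?a = "map (h \<circ> coeff_vec) V"
  have "(h (coeff_vec (V ! i)) \<in> {1..s} \<and> h ` {y \<in> coeff_vec ` set V. H_adj (coeff_vec (V ! i)) y} =
         {z \<in> {1..s}. dyn_adj (h (coeff_vec (V ! i))) z}) \<longleftrightarrow>
      (?a ! i \<in> {1..s} \<and> set (map ((!) ?a) (nbr_indices V ! i)) = set (dynkin_nbrs_upto s (?a ! i)))"
    if "i < length V" for i
    using that assms by (auto simp: image_H_adj_nbrs set_dynkin_nbrs_upto)
  then show ?thesis
    unfolding open_map_iff open_labelling_def by (simp add: all_set_conv_all_nth)
qed

definition same_elems :: "'a list \<Rightarrow> 'a list \<Rightarrow> bool" where
  "same_elems xs ys \<longleftrightarrow> list_all (\<lambda>x. x \<in> set ys) xs \<and> list_all (\<lambda>y. y \<in> set xs) ys"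

lemma same_elems_iff: "same_elems xs ys \<longleftrightarrow> set xs = set ys"
  by (auto simp: same_elems_def list_all_iff)

(* The search labels the stratum in list order. The neighbourhood condition at position i can be
   checked as soon as i and all its neighbours are labelled, i.e. at step completion_step i. *)
definition completion_step :: "nat \<Rightarrow> nat list \<Rightarrow> nat" where
  "completion_step i nbrs = fold max nbrs i"

lemma completion_step_eq_Max: "completion_step i nbrs = Max (insert i (set nbrs))"
  by (simp add: completion_step_def flip: Max.set_eq_fold)

definition completion_schedule :: "nat list list \<Rightarrow> (nat \<times> nat list) list list" where
  "completion_schedule NB =
     map (\<lambda>j. filter (\<lambda>(i, nbrs). completion_step i nbrs = j) (zip [0..<length NB] NB)) [0..<length NB]"

lemma mem_completion_schedule:
  "j < length NB \<Longrightarrow> (i, nbrs) \<in> set (completion_schedule NB ! j) \<longleftrightarrow>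
    i < length NB \<and> nbrs = NB ! i \<and> completion_step i nbrs = j"
  by (auto simp: completion_schedule_def in_set_zip intro!: exI[of _ i])

definition labelling_steps :: "nat list list \<Rightarrow> (nat list \<times> (nat \<times> nat list) list) list" where
  "labelling_steps NB = zip NB (completion_schedule NB)"

lemma length_labelling_steps [simp]: "length (labelling_steps NB) = length NB"
  by (simp add: labelling_steps_def completion_schedule_def)

lemma nth_labelling_steps:
  "j < length NB \<Longrightarrow> labelling_steps NB ! j = (NB ! j, completion_schedule NB ! j)"
  by (simp add: labelling_steps_def completion_schedule_def)

fun consistent_prefix :: "nat \<Rightarrow> nat list \<times> (nat \<times> nat list) list \<Rightarrow> nat list \<Rightarrow> bool" where
  "consistent_prefix s (nbrs, completed) b \<longleftrightarrow>
     (let j = length b - 1 in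
        (j = 0 \<longrightarrow> b ! 0 = s) \<and>
        (\<forall>i\<in>set nbrs. i < j \<longrightarrow> b ! i \<in> set (dynkin_nbrs_upto s (b ! j))) \<and>
        (\<forall>(i, nbrs_i)\<in>set completed. same_elems (map ((!) b) nbrs_i) (dynkin_nbrs_upto s (b ! i))))"

lemma take_agrees_on_completed:
  assumes "completion_step i nbrs < l"
  shows "take l a ! i = a ! i" "map ((!) (take l a)) nbrs = map ((!) a) nbrs"
  using assms by (auto simp: completion_step_eq_Max intro!: map_cong)

lemma open_labelling_if_consistent_prefixes:
  assumes len: "length a = length NB" and bounded: "\<forall>i<length NB. \<forall>j\<in>set (NB ! i). j < length NB"
    and pos: "0 < length a"
    and prefixes: "\<forall>l\<in>{1..length a}. consistent_prefix s (labelling_steps NB ! (l - 1)) (take l a)"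
  shows "a ! 0 = s" "\<forall>i<length a. set (map ((!) a) (NB ! i)) = set (dynkin_nbrs_upto s (a ! i))"
proof -
  have "consistent_prefix s (labelling_steps NB ! 0) (take 1 a)"
    using bspec[OF prefixes, of 1] pos by simp
  then show "a ! 0 = s"
    using pos len by (simp add: nth_labelling_steps)
  show "\<forall>i<length a. set (map ((!) a) (NB ! i)) = set (dynkin_nbrs_upto s (a ! i))"
  proof (intro allI impI)
    fix i assume i: "i < length a"
    let ?l = "Suc (completion_step i (NB ! i))"
    have "completion_step i (NB ! i) < length a"
      using i bounded len by (auto simp: completion_step_eq_Max)
    then have l: "?l \<in> {1..length a}"
      by simp
    have mem: "(i, NB ! i) \<in> set (completion_schedule NB ! (?l - 1))"
      using l i len by (simp add: mem_completion_schedule)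
    have "consistent_prefix s (labelling_steps NB ! (?l - 1)) (take ?l a)"
      using bspec[OF prefixes l] .
    then have "\<forall>(k, nbrs)\<in>set (completion_schedule NB ! (?l - 1)).
        same_elems (map ((!) (take ?l a)) nbrs) (dynkin_nbrs_upto s (take ?l a ! k))"
      using l len by (simp add: nth_labelling_steps Let_def)
    from bspec[OF this mem]
    have "same_elems (map ((!) (take ?l a)) (NB ! i)) (dynkin_nbrs_upto s (take ?l a ! i))"
      by simp
    then show "set (map ((!) a) (NB ! i)) = set (dynkin_nbrs_upto s (a ! i))"
      unfolding take_agrees_on_completed[OF lessI] same_elems_iff .
  qed
qed

lemma consistent_prefixes_if_open_labelling:
  assumes len: "length a = length NB" and root: "a ! 0 = s"
    and opn: "\<forall>i<length a. set (map ((!) a) (NB ! i)) = set (dynkin_nbrs_upto s (a ! i))"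
  shows "\<forall>l\<in>{1..length a}. consistent_prefix s (labelling_steps NB ! (l - 1)) (take l a)"
proof
  fix l assume l: "l \<in> {1..length a}"
  let ?b = "take l a" and ?j = "l - 1"
  have j: "length ?b - 1 = ?j" "?j < length a" "?j < l"
    using l by auto
  have "?j = 0 \<longrightarrow> ?b ! 0 = s"
    using root l by auto
  moreover have "\<forall>i\<in>set (NB ! ?j). i < ?j \<longrightarrow> ?b ! i \<in> set (dynkin_nbrs_upto s (?b ! ?j))"
  proof (intro ballI impI)
    fix i assume i: "i \<in> set (NB ! ?j)" "i < ?j"
    then have "a ! i \<in> set (dynkin_nbrs_upto s (a ! ?j))"
      using opn[rule_format, OF j(2)] by (metis imageI set_map)
    then show "?b ! i \<in> set (dynkin_nbrs_upto s (?b ! ?j))"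
      using i(2) j(3) by simp
  qed
  moreover have "\<forall>(i, nbrs)\<in>set (completion_schedule NB ! ?j).
      same_elems (map ((!) ?b) nbrs) (dynkin_nbrs_upto s (?b ! i))"
  proof
    fix x assume x: "x \<in> set (completion_schedule NB ! ?j)"
    obtain i nbrs where x_eq: "x = (i, nbrs)"
      by (cases x)
    have i: "i < length a" "nbrs = NB ! i" "completion_step i nbrs < l"
      using x mem_completion_schedule[of ?j NB i nbrs] j len by (auto simp: x_eq)
    then have "same_elems (map ((!) ?b) nbrs) (dynkin_nbrs_upto s (?b ! i))"
      unfolding take_agrees_on_completed[OF i(3)] same_elems_iff
      using opn[rule_format, OF i(1)] by simp
    then show "case x of (i, nbrs) \<Rightarrow> same_elems (map ((!) ?b) nbrs) (dynkin_nbrs_upto s (?b ! i))"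
      by (simp add: x_eq)
  qed
  ultimately show "consistent_prefix s (labelling_steps NB ! (l - 1)) ?b"
    using j len by (simp add: nth_labelling_steps Let_def)
qed

lemma consistent_prefixes_iff:
  assumes "length a = length NB" "\<forall>i<length NB. \<forall>j\<in>set (NB ! i). j < length NB" "0 < length a"
  shows "(\<forall>l\<in>{1..length a}. consistent_prefix s (labelling_steps NB ! (l - 1)) (take l a)) \<longleftrightarrow>
    a ! 0 = s \<and> (\<forall>i<length a. set (map ((!) a) (NB ! i)) = set (dynkin_nbrs_upto s (a ! i)))"
  using open_labelling_if_consistent_prefixes[OF assms] consistent_prefixes_if_open_labelling[OF assms(1)]
  by blast

lemma (in coeff_table) nbr_indices_bounded: "\<forall>i<length V. \<forall>j\<in>set (nbr_indices V ! i). j < length V"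
  by (simp add: set_nbr_indices)

lemma (in coeff_table) is_hs_iff_search:
  assumes stratum: "stratum s = coeff_vec ` set V" and s: "s \<in> {1..8}"
    and hd: "V \<noteq> []" "hd V = unit_coeffs s"
  shows "is_hs s h \<longleftrightarrow> h \<in> extensional (stratum s) \<and>
    map (h \<circ> coeff_vec) V \<in> set (search_words (consistent_prefix s) [1..<s + 1]
      (labelling_steps (nbr_indices V)) [])"
proof -
  let ?a = "map (h \<circ> coeff_vec) V" and ?NB = "nbr_indices V"
  let ?open = "\<forall>i<length ?a. set (map ((!) ?a) (?NB ! i)) = set (dynkin_nbrs_upto s (?a ! i))"
  have alphabet: "set [1..<s + 1] = {1..s}"
    by auto
  have root: "h (simple s) = ?a ! 0"
    using hd s by (simp add: simple_coeff_vec hd_conv_nth)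
  have range: "(\<forall>i<length ?a. ?a ! i \<in> {1..s}) \<longleftrightarrow> set ?a \<subseteq> {1..s}"
    by (simp only: subset_code(1) all_set_conv_all_nth)
  have funcset: "h \<in> stratum s \<rightarrow>\<^sub>E {1..s} \<longleftrightarrow> h \<in> extensional (stratum s) \<and> set ?a \<subseteq> {1..s}"
    unfolding PiE_iff stratum by auto
  have "open_map (stratum s) H_adj {1..s} dyn_adj h \<longleftrightarrow> open_labelling s ?NB ?a"
    using open_map_iff_open_labelling[of s h] s by (simp add: stratum)
  then have opn: "open_map (stratum s) H_adj {1..s} dyn_adj h \<longleftrightarrow> set ?a \<subseteq> {1..s} \<and> ?open"
    unfolding open_labelling_def range[symmetric] by blast
  have "?a \<in> set (search_words (consistent_prefix s) [1..<s + 1] (labelling_steps ?NB) []) \<longleftrightarrow>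
      set ?a \<subseteq> {1..s} \<and>
      (\<forall>l\<in>{1..length ?a}. consistent_prefix s (labelling_steps ?NB ! (l - 1)) (take l ?a))"
    unfolding set_search_words alphabet by simp
  also have "\<dots> \<longleftrightarrow> set ?a \<subseteq> {1..s} \<and> ?a ! 0 = s \<and> ?open"
    using consistent_prefixes_iff[of ?a ?NB s] nbr_indices_bounded hd by simp
  finally have search: "?a \<in> set (search_words (consistent_prefix s) [1..<s + 1] (labelling_steps ?NB) []) \<longleftrightarrow>
      set ?a \<subseteq> {1..s} \<and> ?a ! 0 = s \<and> ?open" .
  show ?thesis
    unfolding is_hs_def funcset opn search root by blast
qed

section \<open>Order ideals as bit masks\<close>

definition mask_set :: "int list list \<Rightarrow> bool list \<Rightarrow> (nat \<Rightarrow> int) set" where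
  "mask_set V m = {coeff_vec (V ! i) | i. i < length V \<and> m ! i}"

definition below_indices :: "int list list \<Rightarrow> nat list list" where
  "below_indices V = map (\<lambda>x. true_indices (map (\<lambda>y. list_all2 (\<le>) y x \<and> y \<noteq> x) V)) V"

lemma length_below_indices [simp]: "length (below_indices V) = length V"
  by (simp add: below_indices_def)

definition down_closed_mask :: "nat list list \<Rightarrow> bool list \<Rightarrow> bool" where
  "down_closed_mask DN m \<longleftrightarrow> (\<forall>i<length m. m ! i \<longrightarrow> (\<forall>j\<in>set (DN ! i). m ! j))"

lemma (in coeff_table) coeff_vec_in_mask_set:
  "i < length V \<Longrightarrow> coeff_vec (V ! i) \<in> mask_set V m \<longleftrightarrow> m ! i"
  using coeff_vec_nth_inject by (auto simp: mask_set_def)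

lemma (in coeff_table) set_below_indices:
  "i < length V \<Longrightarrow> set (below_indices V ! i) =
    {j. j < length V \<and> j \<noteq> i \<and> rle (coeff_vec (V ! j)) (coeff_vec (V ! i))}"
  using distinct by (auto simp: below_indices_def set_true_indices rle_coeff_vec length_nth nth_eq_iff_index_eq)

lemma (in coeff_table) order_ideal_mask_set_iff:
  assumes len: "length m = length V"
  shows "order_ideal (coeff_vec ` set V) (mask_set V m) \<longleftrightarrow> down_closed_mask (below_indices V) m"
proof
  assume ideal: "order_ideal (coeff_vec ` set V) (mask_set V m)"
  show "down_closed_mask (below_indices V) m"
    unfolding down_closed_mask_def
  proof (intro allI impI ballI)
    fix i j assume i: "i < length m" "m ! i" and j: "j \<in> set (below_indices V ! i)"
    have "j < length V" "rle (coeff_vec (V ! j)) (coeff_vec (V ! i))"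
      using i len j by (auto simp: set_below_indices)
    moreover have "coeff_vec (V ! i) \<in> mask_set V m"
      using i len by (simp add: coeff_vec_in_mask_set)
    ultimately have "coeff_vec (V ! j) \<in> mask_set V m"
      using ideal by (auto simp: order_ideal_def)
    then show "m ! j"
      using \<open>j < length V\<close> by (simp add: coeff_vec_in_mask_set)
  qed
next
  assume closed: "down_closed_mask (below_indices V) m"
  show "order_ideal (coeff_vec ` set V) (mask_set V m)"
    unfolding order_ideal_def
  proof (intro conjI ballI impI)
    show "mask_set V m \<subseteq> coeff_vec ` set V"
      by (auto simp: mask_set_def)
    fix x y assume x: "x \<in> mask_set V m" and y: "y \<in> coeff_vec ` set V" and le: "rle y x"
    obtain i where i: "i < length V" "m ! i" "x = coeff_vec (V ! i)"
      using x by (auto simp: mask_set_def)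
    obtain j where j: "j < length V" "y = coeff_vec (V ! j)"
      using y by (auto simp: image_coeff_vec_conv)
    have "m ! j"
    proof (cases "j = i")
      case False
      then have "j \<in> set (below_indices V ! i)"
        using i j le by (simp add: set_below_indices)
      then show ?thesis
        using closed i len by (auto simp: down_closed_mask_def)
    qed (use i in simp)
    then show "y \<in> mask_set V m"
      using j by (simp add: coeff_vec_in_mask_set)
  qed
qed

definition down_closed_at_last :: "nat list \<Rightarrow> bool list \<Rightarrow> bool" where
  "down_closed_at_last below b \<longleftrightarrow> (last b \<longrightarrow> (\<forall>j\<in>set below. j < length b - 1 \<and> b ! j))"

lemma down_closed_mask_iff_prefixes:
  assumes below: "\<forall>i<length DN. \<forall>j\<in>set (DN ! i). j < i" and len: "length m = length DN"
  shows "down_closed_mask DN m \<longleftrightarrow> (\<forall>l\<in>{1..length m}. down_closed_at_last (DN ! (l - 1)) (take l m))"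
proof
  assume closed: "down_closed_mask DN m"
  show "\<forall>l\<in>{1..length m}. down_closed_at_last (DN ! (l - 1)) (take l m)"
  proof
    fix l assume l: "l \<in> {1..length m}"
    show "down_closed_at_last (DN ! (l - 1)) (take l m)"
      unfolding down_closed_at_last_def
    proof (intro impI ballI)
      assume "last (take l m)"
      moreover have "last (take l m) = m ! (l - 1)"
        using l by (subst last_conv_nth) auto
      ultimately have top: "m ! (l - 1)"
        by simp
      fix j assume j: "j \<in> set (DN ! (l - 1))"
      have "l - 1 < length m"
        using l by auto
      then have "j < l - 1" "m ! j"
        using top j closed below len by (auto simp: down_closed_mask_def)
      then show "j < length (take l m) - 1 \<and> take l m ! j"
        using l by simp
    qed
  qed
next
  assume prefixes: "\<forall>l\<in>{1..length m}. down_closed_at_last (DN ! (l - 1)) (take l m)"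
  show "down_closed_mask DN m"
    unfolding down_closed_mask_def
  proof (intro allI impI ballI)
    fix i j assume i: "i < length m" "m ! i" and j: "j \<in> set (DN ! i)"
    have "down_closed_at_last (DN ! i) (take (Suc i) m)"
      using bspec[OF prefixes, of "Suc i"] i by simp
    moreover have "last (take (Suc i) m) = m ! i"
      using i by (subst last_conv_nth) auto
    ultimately show "m ! j"
      using i j by (auto simp: down_closed_at_last_def)
  qed
qed

definition ideal_masks :: "int list list \<Rightarrow> bool list list" where
  "ideal_masks V = search_words down_closed_at_last [False, True] (below_indices V) []"

lemma sum_list_less_if_list_all2_le:
  fixes xs ys :: "int list"
  assumes "list_all2 (\<le>) xs ys" "xs \<noteq> ys"
  shows "sum_list xs < sum_list ys"
proof -
  have "sum_list xs \<le> sum_list ys \<and> (xs \<noteq> ys \<longrightarrow> sum_list xs < sum_list ys)"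
    using assms(1) by (induction rule: list_all2_induct) auto
  then show ?thesis
    using assms(2) by blast
qed

lemma (in coeff_table) below_indices_less:
  assumes "sorted (map sum_list V)"
  shows "\<forall>i<length V. \<forall>j\<in>set (below_indices V ! i). j < i"
proof (intro allI impI ballI)
  fix i j assume i: "i < length V" and j: "j \<in> set (below_indices V ! i)"
  then have "j < length V" "sum_list (V ! j) < sum_list (V ! i)"
    using distinct
    by (auto simp: below_indices_def set_true_indices nth_eq_iff_index_eq intro: sum_list_less_if_list_all2_le)
  then show "j < i"
    using assms i by (metis leI length_map not_less nth_map sorted_nth_mono)
qed

lemma (in coeff_table) ideals_eq_mask_set:
  assumes "sorted (map sum_list V)"
  shows "ideals (coeff_vec ` set V) = mask_set V ` set (ideal_masks V)"
proof -
  have below: "\<forall>i<length (below_indices V). \<forall>j\<in>set (below_indices V ! i). j < i"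
    using below_indices_less[OF assms] by simp
  have masks: "set (ideal_masks V) = {m. length m = length V \<and> down_closed_mask (below_indices V) m}"
    using down_closed_mask_iff_prefixes[OF below]
    by (auto simp: ideal_masks_def set_search_words)
  have "J \<in> mask_set V ` set (ideal_masks V)" if "order_ideal (coeff_vec ` set V) J" for J
  proof -
    let ?m = "map (\<lambda>x. coeff_vec x \<in> J) V"
    have sub: "J \<subseteq> coeff_vec ` set V"
      using that by (simp add: order_ideal_def)
    have "J = mask_set V ?m"
    proof
      show "mask_set V ?m \<subseteq> J"
        by (auto simp: mask_set_def)
      show "J \<subseteq> mask_set V ?m"
      proof
        fix x assume "x \<in> J"
        then have "x \<in> coeff_vec ` set V"
          using sub by blast
        then obtain i where "i < length V" "x = coeff_vec (V ! i)"
          by (auto simp: image_coeff_vec_conv)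
        then show "x \<in> mask_set V ?m"
          using \<open>x \<in> J\<close> by (auto simp: mask_set_def)
      qed
    qed
    then show ?thesis
      using that masks order_ideal_mask_set_iff[of ?m] by auto
  qed
  then show ?thesis
    using masks order_ideal_mask_set_iff by (auto simp: ideals_def)
qed

lemma (in coeff_table) mask_set_subset_iff:
  assumes "length m = length V" "length m' = length V"
  shows "mask_set V m \<subseteq> mask_set V m' \<longleftrightarrow> list_all2 (\<longrightarrow>) m m'"
proof -
  have "mask_set V m \<subseteq> mask_set V m' \<longleftrightarrow> (\<forall>i<length V. m ! i \<longrightarrow> m' ! i)"
    by (auto simp: mask_set_def coeff_vec_in_mask_set[symmetric])
  then show ?thesis
    using assms by (simp add: list_all2_conv_all_nth)
qed

definition label_count :: "bool list \<Rightarrow> nat list \<Rightarrow> nat \<Rightarrow> nat" where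
  "label_count m a c = length (filter (\<lambda>(x, y). x \<and> y = c) (zip m a))"

definition psi_coeffs :: "nat \<Rightarrow> nat list \<Rightarrow> bool list \<Rightarrow> int list" where
  "psi_coeffs s a m = map (\<lambda>c. (if c = s + 1 then 1 else 0) + int (label_count m a c)) [1..<9]"

lemma length_psi_coeffs [simp]: "length (psi_coeffs s a m) = 8"
  by (simp add: psi_coeffs_def)

lemma coeff_vec_psi_coeffs:
  "coeff_vec (psi_coeffs s a m) k = (if k \<in> {1..8} then (if k = s + 1 then 1 else 0) + int (label_count m a k) else 0)"
proof (cases "k \<in> {1..8}")
  case True
  then have "k - 1 < 8" "[1..<9] ! (k - 1) = k"
    by auto
  then show ?thesis
    using True by (simp add: coeff_vec_def psi_coeffs_def)
next
  case False
  then show ?thesis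
    by (simp only: coeff_vec_def if_not_P if_False)
qed

lemma label_count_eq_card: "label_count m a c = card {i. i < length m \<and> i < length a \<and> m ! i \<and> a ! i = c}"
  unfolding label_count_def length_filter_conv_card by (intro arg_cong[where f = card]) auto

lemma (in coeff_table) psi_mask_set:
  assumes m: "length m = length V" and h: "\<forall>x\<in>set V. h (coeff_vec x) \<in> {1..8}" and s: "s \<le> 7"
  shows "psi s h (mask_set V m) = coeff_vec (psi_coeffs s (map (h \<circ> coeff_vec) V) m)"
proof
  fix k
  let ?a = "map (h \<circ> coeff_vec) V" and ?I = "{i. i < length V \<and> m ! i}"
  have "mask_set V m = (\<lambda>i. coeff_vec (V ! i)) ` ?I"
    by (auto simp: mask_set_def)
  moreover have "inj_on (\<lambda>i. coeff_vec (V ! i)) ?I"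
    using coeff_vec_nth_inject by (auto simp: inj_on_def)
  ultimately have "(\<Sum>b\<in>mask_set V m. simple (h b) k) = (\<Sum>i\<in>?I. if h (coeff_vec (V ! i)) = k then 1 else 0)"
    by (auto simp: sum.reindex simple_def intro!: sum.cong)
  also have "\<dots> = int (card {i \<in> ?I. h (coeff_vec (V ! i)) = k})"
    by (simp add: sum.If_cases Int_def conj_assoc)
  also have "{i \<in> ?I. h (coeff_vec (V ! i)) = k} = {i. i < length m \<and> i < length ?a \<and> m ! i \<and> ?a ! i = k}"
    using m by auto
  also have "int (card \<dots>) = int (label_count m ?a k)"
    by (simp add: label_count_eq_card)
  finally have count: "(\<Sum>b\<in>mask_set V m. simple (h b) k) = int (label_count m ?a k)" .
  have "k \<notin> {1..8} \<Longrightarrow> label_count m ?a k = 0"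
    using h by (auto simp: label_count_eq_card all_set_conv_all_nth)
  moreover have "k \<notin> {1..8} \<Longrightarrow> simple (s + 1) k = 0"
    using s by (auto simp: simple_def)
  ultimately show "psi s h (mask_set V m) k = coeff_vec (psi_coeffs s ?a m) k"
    unfolding psi_def count coeff_vec_psi_coeffs by (auto simp: simple_def)
qed

lemma psi_coeffs_take:
  assumes "\<forall>i. l \<le> i \<and> i < length m \<longrightarrow> \<not> m ! i"
  shows "psi_coeffs s (take l a) m = psi_coeffs s a m"
proof -
  have "i < l" if "i < length m" "m ! i" for i
    using assms that not_le by blast
  then have "label_count m (take l a) c = label_count m a c" for c
    unfolding label_count_eq_card by (intro arg_cong[where f = card]) auto
  then show ?thesis
    by (simp add: psi_coeffs_def)
qed


(* An ideal is checked at the step that labels its last element. *)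
definition ideal_schedule :: "bool list list \<Rightarrow> nat \<Rightarrow> bool list list list" where
  "ideal_schedule IL n = map (\<lambda>j. filter (\<lambda>m. m ! j \<and> list_all Not (drop (Suc j) m)) IL) [0..<n]"

lemma length_ideal_schedule [simp]: "length (ideal_schedule IL n) = n"
  by (simp add: ideal_schedule_def)

definition root_prefix :: "nat \<Rightarrow> bool list list \<Rightarrow> nat list \<Rightarrow> bool" where
  "root_prefix s ms b \<longleftrightarrow> list_all (\<lambda>m. norm_coeffs (psi_coeffs s b m) = 2) ms"

lemma root_prefixes:
  assumes "\<forall>m\<in>set IL. norm_coeffs (psi_coeffs s a m) = 2"
  shows "\<forall>l\<in>{1..length a}. root_prefix s (ideal_schedule IL (length a) ! (l - 1)) (take l a)"
proof
  fix l assume l: "l \<in> {1..length a}"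
  have "norm_coeffs (psi_coeffs s (take l a) m) = 2"
    if "m \<in> set (ideal_schedule IL (length a) ! (l - 1))" for m
  proof -
    have m: "m \<in> set IL" "list_all Not (drop l m)"
      using that l by (auto simp: ideal_schedule_def)
    have "\<not> m ! i" if "l \<le> i" "i < length m" for i
    proof -
      have "m ! i = drop l m ! (i - l)" "i - l < length (drop l m)"
        using that by simp_all
      then show ?thesis
        using m(2) by (metis list_all_iff nth_mem)
    qed
    then have "\<forall>i. l \<le> i \<and> i < length m \<longrightarrow> \<not> m ! i"
      by blast
    then have "psi_coeffs s (take l a) m = psi_coeffs s a m"
      by (rule psi_coeffs_take)
    then show ?thesis
      using assms m(1) by simp
  qed
  then show "root_prefix s (ideal_schedule IL (length a) ! (l - 1)) (take l a)"
    using l by (simp add: root_prefix_def list_all_iff)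
qed

section \<open>Certificates\<close>

definition order_iso_table :: "(bool list \<times> int list) list \<Rightarrow> bool" where
  "order_iso_table tbl \<longleftrightarrow>
     list_all (\<lambda>(m, p). list_all (\<lambda>(m', p'). list_all2 (\<longrightarrow>) m m' = list_all2 (\<le>) p p') tbl) tbl"

definition hs_checks ::
    "nat \<Rightarrow> int list list \<Rightarrow> int list list \<Rightarrow> nat list \<Rightarrow> nat list list \<Rightarrow> bool list list \<Rightarrow> bool" where
  "hs_checks s V T a NB IL \<longleftrightarrow>
     distinct V \<and> list_all (\<lambda>x. length x = 8) V \<and> V \<noteq> [] \<and> hd V = unit_coeffs s \<and>
     sorted (map sum_list V) \<and>
     search_words (consistent_prefix s) [1..<s + 1] (labelling_steps NB) [] = [a] \<and>
     same_elems (map (psi_coeffs s a) IL) T \<and>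
     order_iso_table (map (\<lambda>m. (m, psi_coeffs s a m)) IL) \<and>
     search_words (root_prefix s) [1..<s + 1] (ideal_schedule IL (length V)) [] = [a]"

(* nbr_indices V and ideal_masks V are passed as arguments so that the simplifier evaluates them
   only once. *)
definition hs_certificate :: "nat \<Rightarrow> int list list \<Rightarrow> int list list \<Rightarrow> nat list \<Rightarrow> bool" where
  "hs_certificate s V T a \<longleftrightarrow> hs_checks s V T a (nbr_indices V) (ideal_masks V)"

locale hs_certified =
  fixes s :: nat and V T :: "int list list" and a :: "nat list"
  assumes certificate: "hs_certificate s V T a"
    and stratum_eq_coeffs: "stratum s = coeff_vec ` set V"
    and target_eq_coeffs: "target s = coeff_vec ` set T"
    and s_range: "s \<in> {1..7}"

sublocale hs_certified \<subseteq> coeff_table V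
  using certificate by unfold_locales (auto simp: hs_certificate_def hs_checks_def list_all_iff)

context hs_certified
begin

lemma certified_labels: "length a = length V" "set a \<subseteq> {1..s}"
proof -
  have "a \<in> set (search_words (consistent_prefix s) [1..<s + 1] (labelling_steps (nbr_indices V)) [])"
    using certificate by (simp add: hs_certificate_def hs_checks_def)
  then show "length a = length V" "set a \<subseteq> {1..s}"
    by (auto simp: set_search_words)
qed

lemma hS_eq_label_fun: "hS s = label_fun V a"
  unfolding hS_def
proof (rule the_equality)
  have "is_hs s h \<longleftrightarrow> h = label_fun V a" for h
    using is_hs_iff_search[OF stratum_eq_coeffs] certificate s_range certified_labels(1)
    by (auto simp: hs_certificate_def hs_checks_def eq_label_fun_iff stratum_eq_coeffs)
  then show "is_hs s (label_fun V a)" "\<And>h. is_hs s h \<Longrightarrow> h = label_fun V a"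
    by blast+
qed

lemma ideals_stratum: "ideals (stratum s) = mask_set V ` set (ideal_masks V)"
  using certificate by (simp add: stratum_eq_coeffs ideals_eq_mask_set hs_certificate_def hs_checks_def)

lemma length_ideal_masks: "m \<in> set (ideal_masks V) \<Longrightarrow> length m = length V"
  by (simp add: ideal_masks_def set_search_words)

lemma psi_mask_set_labels:
  assumes "map (h \<circ> coeff_vec) V = a" "m \<in> set (ideal_masks V)"
  shows "psi s h (mask_set V m) = coeff_vec (psi_coeffs s a m)"
proof -
  have range: "h (coeff_vec x) \<in> {1..s}" if "x \<in> set V" for x
    by (metis (no_types, lifting) assms(1) comp_apply imageI certified_labels(2) list.set_map subsetD that)
  have "\<forall>x\<in>set V. h (coeff_vec x) \<in> {1..8}"
  proof
    fix x assume "x \<in> set V"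
    then have "h (coeff_vec x) \<in> {1..s}"
      by (rule range)
    then show "h (coeff_vec x) \<in> {1..8}"
      using s_range by simp
  qed
  then show ?thesis
    using psi_mask_set[of m h s] assms length_ideal_masks s_range by simp
qed

lemma poset_iso_onto_if_labels:
  assumes labels: "map (h \<circ> coeff_vec) V = a"
  shows "poset_iso_onto s h (target s)"
proof -
  let ?IL = "set (ideal_masks V)"
  have order: "mask_set V m \<subseteq> mask_set V m' \<longleftrightarrow> rle (psi s h (mask_set V m)) (psi s h (mask_set V m'))"
    if "m \<in> ?IL" "m' \<in> ?IL" for m m'
  proof -
    have "list_all2 (\<longrightarrow>) m m' \<longleftrightarrow> list_all2 (\<le>) (psi_coeffs s a m) (psi_coeffs s a m')"
      using certificate that by (auto simp: hs_certificate_def hs_checks_def order_iso_table_def list_all_iff)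
    then show ?thesis
      using that by (simp add: mask_set_subset_iff length_ideal_masks psi_mask_set_labels[OF labels]
          rle_coeff_vec)
  qed
  have "psi s h ` mask_set V ` ?IL = coeff_vec ` set (map (psi_coeffs s a) (ideal_masks V))"
    by (auto simp: image_image psi_mask_set_labels[OF labels])
  also have "\<dots> = target s"
    using certificate by (simp add: hs_certificate_def hs_checks_def target_eq_coeffs same_elems_iff)
  finally have onto: "psi s h ` mask_set V ` ?IL = target s" .
  have "inj_on (psi s h) (mask_set V ` ?IL)"
  proof (rule inj_onI)
    fix J J' assume "J \<in> mask_set V ` ?IL" "J' \<in> mask_set V ` ?IL" and eq: "psi s h J = psi s h J'"
    then obtain m m' where m: "m \<in> ?IL" "J = mask_set V m" and m': "m' \<in> ?IL" "J' = mask_set V m'"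
      by blast
    have "rle (psi s h J) (psi s h J')" "rle (psi s h J') (psi s h J)"
      using eq by (simp_all add: rle_def)
    then show "J = J'"
      using order[OF m(1) m'(1)] order[OF m'(1) m(1)] m m' by blast
  qed
  then show ?thesis
    unfolding poset_iso_onto_def ideals_stratum using onto order by (auto simp: bij_betw_def)
qed

lemma labels_if_poset_iso_onto:
  assumes funcset: "h \<in> stratum s \<rightarrow> {1..s}" and iso: "poset_iso_onto s h (target s)"
  shows "map (h \<circ> coeff_vec) V = a"
proof -
  let ?a = "map (h \<circ> coeff_vec) V"
  have range: "set ?a \<subseteq> {1..s}"
    using funcset by (auto simp: stratum_eq_coeffs)
  have "norm_coeffs (psi_coeffs s ?a m) = 2" if "m \<in> set (ideal_masks V)" for m
  proof -
    have "psi s h (mask_set V m) \<in> target s"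
      using iso that by (auto simp: poset_iso_onto_def ideals_stratum bij_betw_def)
    then have "form (psi s h (mask_set V m)) (psi s h (mask_set V m)) = 2"
      using target_subset_pos_roots form_pos_root by blast
    moreover have "psi s h (mask_set V m) = coeff_vec (psi_coeffs s ?a m)"
      using range s_range that by (intro psi_mask_set length_ideal_masks) auto
    ultimately show ?thesis
      by (simp add: form_coeff_vec)
  qed
  then have "?a \<in> set (search_words (root_prefix s) [1..<s + 1] (ideal_schedule (ideal_masks V) (length V)) [])"
    using range root_prefixes[of "ideal_masks V" s ?a] by (auto simp: set_search_words)
  then show ?thesis
    using certificate by (simp add: hs_certificate_def hs_checks_def)
qed

theorem hS_canonical_poset_iso:
  "poset_iso_onto s (hS s) (target s) \<and>
    (\<forall>h. h \<in> stratum s \<rightarrow> {1..s} \<and> poset_iso_onto s h (target s) \<longrightarrow> (\<forall>b\<in>stratum s. h b = hS s b))"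
proof (intro conjI allI impI ballI)
  show "poset_iso_onto s (hS s) (target s)"
    using poset_iso_onto_if_labels map_label_fun[OF certified_labels(1)] by (simp add: hS_eq_label_fun)
  fix h b assume "h \<in> stratum s \<rightarrow> {1..s} \<and> poset_iso_onto s h (target s)" "b \<in> stratum s"
  then have "map (h \<circ> coeff_vec) V = map (hS s \<circ> coeff_vec) V"
    using labels_if_poset_iso_onto map_label_fun[OF certified_labels(1)] by (simp add: hS_eq_label_fun)
  then show "h b = hS s b"
    using \<open>b \<in> stratum s\<close> by (auto simp: stratum_eq_coeffs)
qed

end

section \<open>The computations\<close>

schematic_goal unit_vectors_eq: "unit_vectors = ?U"
  by (simp add: unit_vectors_def unit_coeffs_def upt_rec)

(* upt_rec is needed because the simplifier rewrites 1::nat to Suc 0, so upt_rec_numeral does not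
   apply to [0..<n] and [1..<n]. *)
lemmas hs_certificate_simps =
  hs_certificate_def hs_checks_def stratum_coeffs_def target_coeffs_def pos_root_coeffs_def
  highest_root_coeffs_def unit_coeffs_def upt_rec nbr_indices_def true_indices_def adjacent_coeffs_def
  unit_vectors_eq labelling_steps_def completion_schedule_def completion_step_def Let_def
  dynkin_nbrs_upto_def dynkin_nbrs_def same_elems_def ideal_masks_def below_indices_def
  down_closed_at_last_def psi_coeffs_def label_count_def order_iso_table_def ideal_schedule_def
  root_prefix_def norm_coeffs_def simple_pairing_def

(* The label lists are the values of h_s along stratum_coeffs s. *)
lemma hs_certificate_3: "hs_certificate 3 (stratum_coeffs 3) (target_coeffs 3) [3,2,1]"
  by (simp add: hs_certificate_simps)

lemma hs_certificate_4: "hs_certificate 4 (stratum_coeffs 4) (target_coeffs 4) [4,3,2,4,1,3]"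
  by (simp add: hs_certificate_simps)

lemma hs_certificate_5: "hs_certificate 5 (stratum_coeffs 5) (target_coeffs 5) [5,4,3,2,4,1,5,3,4,2]"
  by (simp add: hs_certificate_simps)

lemma hs_certificate_6:
  "hs_certificate 6 (stratum_coeffs 6) (target_coeffs 6) [6,5,4,3,2,4,1,5,3,6,4,5,2,4,3,1]"
  by (simp add: hs_certificate_simps)

lemma hs_certificate_7:
  "hs_certificate 7 (stratum_coeffs 7) (target_coeffs 7)
     [7,6,5,4,3,2,4,1,5,3,6,4,7,5,2,6,4,5,3,4,1,2,3,4,5,6,7]"
  by (simp add: hs_certificate_simps)

theorem mainTheorem13:
  assumes "s \<in> {3,4,5,6,7::nat}"
  shows "poset_iso_onto s (hS s) (target s) \<and>
         (\<forall>h. h \<in> stratum s \<rightarrow> {1..s} \<and> poset_iso_onto s h (target s)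
              \<longrightarrow> (\<forall>b\<in>stratum s. h b = hS s b))"
proof -
  obtain a where "hs_certificate s (stratum_coeffs s) (target_coeffs s) a"
    using assms hs_certificate_3 hs_certificate_4 hs_certificate_5 hs_certificate_6 hs_certificate_7
    by auto
  moreover have "stratum s = coeff_vec ` set (stratum_coeffs s)" "target s = coeff_vec ` set (target_coeffs s)"
    using assms by (auto simp: stratum_eq target_eq)
  ultimately have "hs_certified s (stratum_coeffs s) (target_coeffs s) a"
    using assms by (intro hs_certified.intro) auto
  then show ?thesis
    by (rule hs_certified.hS_canonical_poset_iso)
qed

end
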